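(* Let $X$ be a Banach lattice and $P\colon X\to X$ a strictly positive projection. If the only closed ideals $J$ of $X$ with $P(J)\subseteq J$ are $\{0\}$ and $X$, then $P$ has rank $1$.
   Context: A projection $P$ ($P^2=P$, linear) on a vector lattice is strictly positive if $x>0$ implies $Px>0$. *)

theory Defs
  imports "HOL-Analysis.Analysis"
begin

text \<open>Banach lattices are modelled on a type that is a real Banach space,
  an ordered real vector space and a lattice (hence a vector lattice), together
  with the lattice-norm axiom below.\<close>

definition labs :: "'a::{ordered_real_vector, lattice} \<Rightarrow> 'a" where
  "labs x = sup x (- x)"

definition banach_lattice_norm :: "'a::{banach, ordered_real_vector, lattice} itself \<Rightarrow> bool" where
  "banach_lattice_norm _ \<longleftrightarrow> (\<forall>x y::'a. labs x \<le> labs y \<longrightarrow> norm x \<le> norm y)"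

definition lattice_ideal :: "'a::{ordered_real_vector, lattice} set \<Rightarrow> bool" where
  "lattice_ideal J \<longleftrightarrow> subspace J \<and> (\<forall>x y. y \<in> J \<and> labs x \<le> labs y \<longrightarrow> x \<in> J)"

definition projection :: "('a::real_vector \<Rightarrow> 'a) \<Rightarrow> bool" where
  "projection P \<longleftrightarrow> linear P \<and> P \<circ> P = P"

definition strictly_positive :: "('a::ordered_real_vector \<Rightarrow> 'a) \<Rightarrow> bool" where
  "strictly_positive P \<longleftrightarrow> (\<forall>x. 0 < x \<longrightarrow> 0 < P x)"

end

theory Submission
  imports Defs "HOL-Library.Lattice_Algebras"
begin

(*
  Strict positivity turns v <= P v into P v = v, so the positive part of a fixed point of P is
  again a fixed point. Two disjoint positive fixed points y and z cannot exist: the set of all x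
  with P |x| disjoint from z is an ideal, P-invariant because |P x| <= P |x|, and closed because
  positive operators on a Banach lattice are bounded; it contains y but not z. Hence every fixed
  point is positive or negative. Applied to z - t y for a fixed y > 0 and all real t, this makes
  the closed sets {t. t y <= z} and {t. z <= t y} cover the real line, so by connectedness they
  meet, i.e. every fixed point z is a multiple of y.
*)

interpretation vector_lattice: lattice_ab_group_add_abs labs "(+)"
  "0 :: 'a::{ordered_real_vector, lattice}" "(-)" uminus "(\<le>)" "(<)" inf sup
  by unfold_locales (simp add: labs_def)

lemma scaleR_inf_nonneg:
  fixes a b :: "'a::{ordered_real_vector, lattice}"
  assumes "0 \<le> c"
  shows "c *\<^sub>R inf a b = inf (c *\<^sub>R a) (c *\<^sub>R b)"
proof (cases "c = 0")
  case False
  with assms have c: "0 < c" by simp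
  show ?thesis
  proof (rule antisym)
    show "c *\<^sub>R inf a b \<le> inf (c *\<^sub>R a) (c *\<^sub>R b)"
      using assms by (simp add: scaleR_left_mono)
    have "inverse c *\<^sub>R inf (c *\<^sub>R a) (c *\<^sub>R b) \<le> inverse c *\<^sub>R (c *\<^sub>R x)"
      if "x = a \<or> x = b" for x
      using that c by (intro scaleR_left_mono) auto
    then have "inverse c *\<^sub>R inf (c *\<^sub>R a) (c *\<^sub>R b) \<le> inf a b"
      using c by simp
    then show "inf (c *\<^sub>R a) (c *\<^sub>R b) \<le> c *\<^sub>R inf a b"
      using c scaleR_left_mono[of _ "inf a b" c] by fastforce
  qed
qed simp

lemma scaleR_sup_nonneg:
  fixes a b :: "'a::{ordered_real_vector, lattice}"
  assumes "0 \<le> c"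
  shows "c *\<^sub>R sup a b = sup (c *\<^sub>R a) (c *\<^sub>R b)"
proof -
  have "c *\<^sub>R sup a b = - (c *\<^sub>R inf (- a) (- b))"
    by (simp only: vector_lattice.sup_eq_neg_inf[of a b] scaleR_minus_right)
  also have "\<dots> = sup (c *\<^sub>R a) (c *\<^sub>R b)"
    by (simp only: scaleR_inf_nonneg[OF assms] scaleR_minus_right vector_lattice.neg_inf_eq_sup minus_minus)
  finally show ?thesis .
qed

lemma labs_scaleR: "labs (c *\<^sub>R x) = \<bar>c\<bar> *\<^sub>R labs (x::'a::{ordered_real_vector, lattice})"
proof -
  have nonneg: "labs (d *\<^sub>R x) = d *\<^sub>R labs x" if "0 \<le> d" for d
    using that by (simp add: labs_def scaleR_sup_nonneg)
  show ?thesis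
  proof (cases "0 \<le> c")
    case False
    then have "labs (c *\<^sub>R x) = labs ((- c) *\<^sub>R x)"
      by (metis vector_lattice.abs_minus_cancel scaleR_minus_left)
    also have "\<dots> = (- c) *\<^sub>R labs x"
      using False by (intro nonneg) simp
    finally show ?thesis
      using False by simp
  qed (simp add: nonneg)
qed

lemma inf_add_le_add_inf:
  fixes a b z :: "'a::{ordered_real_vector, lattice}"
  assumes "0 \<le> a" "0 \<le> b" "0 \<le> z"
  shows "inf (a + b) z \<le> inf a z + inf b z"
proof -
  have "inf (a + b) z \<le> inf (a + b) (z + b)"
    using assms(2) by (intro inf_mono) (simp_all add: add_increasing2)
  also have "\<dots> = inf a z + b"
    by (rule vector_lattice.add_inf_distrib_right[symmetric])
  finally have "inf (a + b) z \<le> inf a z + b" .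
  moreover have "inf (a + b) z \<le> inf a z + z"
    using assms by (intro le_infI2 add_increasing) simp_all
  ultimately have "inf (a + b) z \<le> inf (inf a z + b) (inf a z + z)"
    by simp
  also have "\<dots> = inf a z + inf b z"
    by (rule vector_lattice.add_inf_distrib_left[symmetric])
  finally show ?thesis .
qed

lemma labs_inf_diff_le: "labs (inf a z - inf b z) \<le> labs (a - (b::'a::{ordered_real_vector, lattice}))"
proof -
  have shift: "inf c z \<le> inf d z + labs (a - b)" if "c - d \<le> labs (a - b)" for c d
  proof -
    have "inf c z \<le> inf (d + labs (a - b)) (z + labs (a - b))"
      using that by (intro inf_mono) (simp_all add: diff_le_eq add.commute add_increasing2)
    then show ?thesis
      by (simp only: vector_lattice.add_inf_distrib_right)
  qed
  have "a - b \<le> labs (a - b)" "b - a \<le> labs (a - b)"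
    using vector_lattice.abs_ge_self vector_lattice.abs_ge_minus_self[of "a - b"] by simp_all
  from this[THEN shift] show ?thesis
    unfolding vector_lattice.abs_le_iff by (metis add.commute diff_le_eq minus_diff_eq)
qed

lemma inf_pprt_pprt_uminus: "inf (vector_lattice.pprt x) (vector_lattice.pprt (- x)) = 0"
proof -
  have "vector_lattice.pprt (- x) = - x + vector_lattice.pprt x"
    by (simp add: vector_lattice.pprt_def vector_lattice.add_sup_distrib_left sup_commute)
  then have "inf (vector_lattice.pprt x) (vector_lattice.pprt (- x))
      = inf (0 + vector_lattice.pprt x) (- x + vector_lattice.pprt x)"
    by simp
  also have "\<dots> = inf 0 (- x) + vector_lattice.pprt x"
    by (rule vector_lattice.add_inf_distrib_right[symmetric])
  also have "inf 0 (- x) = - vector_lattice.pprt x"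
    by (simp add: vector_lattice.pprt_def vector_lattice.neg_sup_eq_inf inf_commute)
  finally show ?thesis
    by simp
qed

lemma lattice_idealI:
  fixes J :: "'a::{ordered_real_vector, lattice} set"
  assumes zero: "0 \<in> J"
    and add: "\<And>a b. a \<in> J \<Longrightarrow> b \<in> J \<Longrightarrow> a + b \<in> J"
    and solid: "\<And>x y. y \<in> J \<Longrightarrow> labs x \<le> labs y \<Longrightarrow> x \<in> J"
  shows "lattice_ideal J"
proof -
  have multiple: "of_nat n *\<^sub>R a \<in> J" if "a \<in> J" for n a
    using that by (induction n) (simp_all add: zero add scaleR_add_left)
  have "c *\<^sub>R a \<in> J" if "a \<in> J" for c a
  proof -
    obtain n :: nat where "\<bar>c\<bar> \<le> of_nat n"
      using real_arch_simple by blast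
    then have "labs (c *\<^sub>R a) \<le> labs (of_nat n *\<^sub>R a)"
      by (simp add: labs_scaleR scaleR_right_mono)
    then show ?thesis
      using solid multiple that by blast
  qed
  then show ?thesis
    unfolding lattice_ideal_def subspace_def using zero add solid by blast
qed

lemma lattice_ideal_nonneg_le:
  fixes J :: "'a::{ordered_real_vector, lattice} set"
  assumes "lattice_ideal J" "y \<in> J" "0 \<le> x" "x \<le> y"
  shows "x \<in> J"
proof -
  have "labs x \<le> labs y"
    using assms(3,4) by (simp add: vector_lattice.abs_of_nonneg)
  with assms(1,2) show ?thesis
    unfolding lattice_ideal_def by blast
qed

definition disjoint_complement :: "'a::{ordered_real_vector, lattice} \<Rightarrow> 'a set" where
  "disjoint_complement z = {x. inf (labs x) (labs z) = 0}"

lemma lattice_ideal_disjoint_complement: "lattice_ideal (disjoint_complement z)"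
proof (rule lattice_idealI)
  show "0 \<in> disjoint_complement z"
    using inf_absorb1[OF vector_lattice.abs_ge_zero[of z]] by (simp add: disjoint_complement_def)
next
  fix a b
  assume "a \<in> disjoint_complement z" "b \<in> disjoint_complement z"
  have "inf (labs (a + b)) (labs z) \<le> inf (labs a + labs b) (labs z)"
    by (intro inf_mono vector_lattice.abs_triangle_ineq order_refl)
  also have "\<dots> \<le> inf (labs a) (labs z) + inf (labs b) (labs z)"
    by (intro inf_add_le_add_inf) simp_all
  also have "\<dots> = 0"
    using \<open>a \<in> disjoint_complement z\<close> \<open>b \<in> disjoint_complement z\<close>
    by (simp add: disjoint_complement_def)
  finally show "a + b \<in> disjoint_complement z"
    unfolding disjoint_complement_def by (intro CollectI antisym) simp_all
next
  fix x y
  assume "y \<in> disjoint_complement z" "labs x \<le> labs y"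
  have "inf (labs x) (labs z) \<le> inf (labs y) (labs z)"
    using \<open>labs x \<le> labs y\<close> by (intro inf_mono order_refl)
  also have "\<dots> = 0"
    using \<open>y \<in> disjoint_complement z\<close> by (simp add: disjoint_complement_def)
  finally show "x \<in> disjoint_complement z"
    unfolding disjoint_complement_def by (intro CollectI antisym) simp_all
qed

lemma positive_linear_mono:
  fixes T :: "'a::ordered_real_vector \<Rightarrow> 'b::ordered_real_vector"
  assumes "linear T" "\<And>x. 0 \<le> x \<Longrightarrow> 0 \<le> T x" "a \<le> b"
  shows "T a \<le> T b"
proof -
  have "0 \<le> T (b - a)"
    using assms(3) by (intro assms(2)) simp
  then show ?thesis
    by (simp add: linear_diff[OF assms(1)])
qed

lemma labs_positive_linear_le:
  fixes T :: "'a::{ordered_real_vector, lattice} \<Rightarrow> 'b::{ordered_real_vector, lattice}"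
  assumes "linear T" "\<And>x. 0 \<le> x \<Longrightarrow> 0 \<le> T x"
  shows "labs (T x) \<le> T (labs x)"
  using positive_linear_mono[OF assms vector_lattice.abs_ge_self[of x]]
    positive_linear_mono[OF assms vector_lattice.abs_ge_minus_self[of x]]
  by (simp add: vector_lattice.abs_le_iff linear_neg[OF assms(1)])

lemma lattice_ideal_vimage_positive:
  fixes T :: "'a::{ordered_real_vector, lattice} \<Rightarrow> 'b::{ordered_real_vector, lattice}"
  assumes J: "lattice_ideal J" and T: "linear T" "\<And>x. 0 \<le> x \<Longrightarrow> 0 \<le> T x"
  shows "lattice_ideal {x. T (labs x) \<in> J}"
proof (rule lattice_idealI)
  show "0 \<in> {x. T (labs x) \<in> J}"
    using J by (simp add: linear_0[OF T(1)] lattice_ideal_def subspace_0)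
next
  fix a b
  assume "a \<in> {x. T (labs x) \<in> J}" "b \<in> {x. T (labs x) \<in> J}"
  then have "T (labs a) + T (labs b) \<in> J"
    using J by (simp add: lattice_ideal_def subspace_add)
  moreover have "T (labs (a + b)) \<le> T (labs a) + T (labs b)"
    using positive_linear_mono[OF T vector_lattice.abs_triangle_ineq]
    by (simp add: linear_add[OF T(1)])
  ultimately show "a + b \<in> {x. T (labs x) \<in> J}"
    using lattice_ideal_nonneg_le[OF J] T(2) by simp
next
  fix x y
  assume "y \<in> {x. T (labs x) \<in> J}" "labs x \<le> labs y"
  then show "x \<in> {x. T (labs x) \<in> J}"
    using lattice_ideal_nonneg_le[OF J] T(2) positive_linear_mono[OF T] by simp
qed

context
  assumes banach_lattice: "banach_lattice_norm TYPE('a::{banach, ordered_real_vector, lattice})"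
begin

lemma norm_le_norm_if_labs_le: "labs x \<le> labs y \<Longrightarrow> norm x \<le> norm (y::'a)"
  using banach_lattice unfolding banach_lattice_norm_def by blast

lemma norm_labs [simp]: "norm (labs x) = norm (x::'a)"
  by (intro antisym norm_le_norm_if_labs_le) simp_all

lemma norm_mono_nonneg: "0 \<le> x \<Longrightarrow> x \<le> y \<Longrightarrow> norm x \<le> norm (y::'a)"
  by (rule norm_le_norm_if_labs_le) (simp add: vector_lattice.abs_of_nonneg)

lemma lipschitz_on_labs: "1-lipschitz_on S (labs :: 'a \<Rightarrow> 'a)"
proof (rule lipschitz_onI)
  fix a b :: 'a
  have "norm (labs a - labs b) \<le> norm (a - b)"
    using norm_le_norm_if_labs_le[OF vector_lattice.abs_triangle_ineq3[of a b]] by simp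
  then show "dist (labs a) (labs b) \<le> 1 * dist a b"
    by (simp add: dist_norm)
qed simp

lemma lipschitz_on_inf: "1-lipschitz_on S (\<lambda>x::'a. inf x z)"
proof (rule lipschitz_onI)
  fix a b :: 'a
  have "norm (inf a z - inf b z) \<le> norm (a - b)"
    using norm_le_norm_if_labs_le[OF order_trans[OF labs_inf_diff_le[of a z b]]] by simp
  then show "dist (inf a z) (inf b z) \<le> 1 * dist a b"
    by (simp add: dist_norm)
qed simp

lemma closed_nonneg_cone: "closed {x::'a. 0 \<le> x}"
proof -
  have "{x::'a. 0 \<le> x} = (\<lambda>x. inf x 0) -` {0}"
    by (auto simp: inf.absorb_iff2)
  then show ?thesis
    using closed_vimage[OF closed_singleton lipschitz_on_continuous_on[OF lipschitz_on_inf]]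
    by simp
qed

lemma closed_disjoint_complement: "closed (disjoint_complement (z::'a))"
proof -
  have "disjoint_complement z = (\<lambda>x. inf (labs x) (labs z)) -` {0}"
    by (auto simp: disjoint_complement_def)
  moreover have "(1 * 1)-lipschitz_on UNIV (\<lambda>x. inf (labs x) (labs z))"
    by (rule lipschitz_on_compose2[OF lipschitz_on_labs lipschitz_on_inf])
  ultimately show ?thesis
    using closed_vimage[OF closed_singleton lipschitz_on_continuous_on] by metis
qed

lemma le_suminf_nonneg:
  fixes u :: "nat \<Rightarrow> 'a"
  assumes "summable u" "\<And>k. 0 \<le> u k"
  shows "u n \<le> suminf u"
proof -
  have "((\<lambda>N. (\<Sum>k<N. u k) - u n) \<longlongrightarrow> suminf u - u n) sequentially"
    using summable_LIMSEQ[OF assms(1)] by (intro tendsto_diff tendsto_const)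
  moreover have "eventually (\<lambda>N. (\<Sum>k<N. u k) - u n \<in> {x. 0 \<le> x}) sequentially"
  proof (rule eventually_sequentiallyI[of "Suc n"])
    fix N
    assume "Suc n \<le> N"
    then have "(\<Sum>k<N. u k) - u n = (\<Sum>k\<in>{..<N} - {n}. u k)"
      by (simp add: sum_diff1)
    also have "0 \<le> \<dots>"
      using assms(2) by (simp add: sum_nonneg)
    finally show "(\<Sum>k<N. u k) - u n \<in> {x. 0 \<le> x}"
      by simp
  qed
  ultimately have "suminf u - u n \<in> {x. 0 \<le> x}"
    by (intro Lim_in_closed_set[OF closed_nonneg_cone]) simp_all
  then show ?thesis
    by simp
qed

lemma positive_linear_bounded_on_nonneg:
  fixes T :: "'a \<Rightarrow> 'a"
  assumes T: "linear T" "\<And>x. 0 \<le> x \<Longrightarrow> 0 \<le> T x"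
  obtains C where "\<And>x. 0 \<le> x \<Longrightarrow> norm (T x) \<le> C * norm x"
proof -
  have "\<exists>C. \<forall>x\<ge>0. norm (T x) \<le> C * norm x"
  proof (rule ccontr)
    assume "\<nexists>C. \<forall>x\<ge>0. norm (T x) \<le> C * norm x"
    then have "\<forall>n::nat. \<exists>x\<ge>0. 4 ^ n * norm x < norm (T x)"
      by (meson not_le)
    then obtain x where x: "\<And>n. 0 \<le> x n" "\<And>n. 4 ^ n * norm (x n) < norm (T (x n))"
      by metis
    have x_nonzero: "x n \<noteq> 0" for n
      using x(2)[of n] by (auto simp: linear_0[OF T(1)])
    define u where "u n = (1 / (2 ^ n * norm (x n))) *\<^sub>R x n" for n
    have u_nonneg: "0 \<le> u n" for n
      unfolding u_def using x(1) by (simp add: scaleR_nonneg_nonneg)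
    have norm_u: "norm (u n) = (1 / 2) ^ n" for n
      using x_nonzero[of n] by (simp add: u_def power_divide)
    have "summable (\<lambda>n. norm (u n))"
      unfolding norm_u by (rule summable_geometric) simp
    then have "summable u"
      by (rule summable_norm_cancel)
    have "2 ^ n < norm (T (suminf u))" for n
    proof -
      have "(2 ^ n * norm (x n)) * 2 ^ n < norm (T (x n))"
        using x(2)[of n] by (simp add: power_mult_distrib[symmetric] mult_ac)
      then have "2 ^ n < norm (T (u n))"
        using x_nonzero[of n]
        by (simp add: u_def linear_scale[OF T(1)] pos_less_divide_eq mult_ac)
      also have "\<dots> \<le> norm (T (suminf u))"
        using le_suminf_nonneg[OF \<open>summable u\<close> u_nonneg]
        by (intro norm_mono_nonneg T(2) u_nonneg positive_linear_mono[OF T])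
      finally show ?thesis .
    qed
    moreover obtain n where "norm (T (suminf u)) < 2 ^ n"
      using real_arch_pow[of 2] by auto
    ultimately show False
      using less_asym by blast
  qed
  then show ?thesis
    using that by blast
qed

lemma bounded_linear_if_positive:
  fixes T :: "'a \<Rightarrow> 'a"
  assumes T: "linear T" "\<And>x. 0 \<le> x \<Longrightarrow> 0 \<le> T x"
  shows "bounded_linear T"
proof -
  obtain C where C: "\<And>x. 0 \<le> x \<Longrightarrow> norm (T x) \<le> C * norm x"
    using positive_linear_bounded_on_nonneg[OF T] by blast
  have "norm (T x) \<le> norm x * C" for x
  proof -
    have "norm (T x) \<le> norm (T (labs x))"
      using labs_positive_linear_le[OF T, of x] T(2)[of "labs x"]
      by (intro norm_le_norm_if_labs_le) (simp add: vector_lattice.abs_of_nonneg)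
    also have "\<dots> \<le> norm x * C"
      using C[of "labs x"] by (simp add: mult.commute)
    finally show ?thesis .
  qed
  with T(1) show ?thesis
    unfolding bounded_linear_def bounded_linear_axioms_def by blast
qed

lemma nonneg_in_span_if_comparable_along_line:
  fixes y z :: 'a
  assumes "0 < y" "0 \<le> z" and comparable: "\<And>t. z - t *\<^sub>R y \<le> 0 \<or> 0 \<le> z - t *\<^sub>R y"
  shows "z \<in> span {y}"
proof (rule ccontr)
  assume z: "z \<notin> span {y}"
  define below where "below = {t. t *\<^sub>R y \<le> z}"
  define above where "above = {t. z \<le> t *\<^sub>R y}"
  have "below = (\<lambda>t. z - t *\<^sub>R y) -` {x. 0 \<le> x}" "above = (\<lambda>t. t *\<^sub>R y - z) -` {x. 0 \<le> x}"
    by (auto simp: below_def above_def)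
  then have "closed below" "closed above"
    by (simp_all only:) (intro continuous_closed_vimage closed_nonneg_cone continuous_intros)+
  moreover have "UNIV \<subseteq> below \<union> above"
    using comparable by (auto simp: below_def above_def)
  moreover have "below \<inter> above \<inter> UNIV = {}"
    using z by (auto simp: below_def above_def span_singleton dest: antisym)
  moreover have "0 \<in> below"
    using \<open>0 \<le> z\<close> by (simp add: below_def)
  moreover have "(norm z + 1) / norm y \<in> above"
  proof -
    let ?t = "(norm z + 1) / norm y"
    have "norm (?t *\<^sub>R y) = norm z + 1"
      using \<open>0 < y\<close> by auto
    then have "\<not> norm (?t *\<^sub>R y) \<le> norm z"
      by simp
    moreover have "0 \<le> ?t *\<^sub>R y"
      using \<open>0 < y\<close> by (simp add: scaleR_nonneg_nonneg)
    ultimately have "?t \<notin> below"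
      using norm_mono_nonneg[of "?t *\<^sub>R y" z] by (auto simp only: below_def mem_Collect_eq)
    then show ?thesis
      using \<open>UNIV \<subseteq> below \<union> above\<close> by blast
  qed
  ultimately show False
    using connected_closedD[OF connected_UNIV, of below above] by blast
qed

lemma in_span_if_comparable_along_line:
  fixes y z :: 'a
  assumes "0 < y" and comparable: "\<And>t. z - t *\<^sub>R y \<le> 0 \<or> 0 \<le> z - t *\<^sub>R y"
  shows "z \<in> span {y}"
proof -
  consider "0 \<le> z" | "0 \<le> - z"
    using comparable[of 0] by auto
  then show ?thesis
  proof cases
    case 1
    with \<open>0 < y\<close> show ?thesis
      using comparable by (rule nonneg_in_span_if_comparable_along_line)
  next
    case 2
    have "- z - t *\<^sub>R y \<le> 0 \<or> 0 \<le> - z - t *\<^sub>R y" for t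
    proof -
      have "- z - t *\<^sub>R y = - (z - (- t) *\<^sub>R y)"
        by simp
      then show ?thesis
        using comparable[of "- t"] by (metis neg_le_0_iff_le neg_0_le_iff_le)
    qed
    with \<open>0 < y\<close> 2 have "- z \<in> span {y}"
      by (rule nonneg_in_span_if_comparable_along_line)
    then show ?thesis
      using span_neg by fastforce
  qed
qed
end

locale strictly_positive_projection =
  fixes P :: "'a::{banach, ordered_real_vector, lattice} \<Rightarrow> 'a"
  assumes banach_lattice: "banach_lattice_norm TYPE('a)"
    and projection: "projection P"
    and strictly_positive: "strictly_positive P"
begin

lemma linear: "linear P"
  using projection by (simp add: projection_def)

lemma idempotent [simp]: "P (P x) = P x"
  using projection unfolding projection_def by (metis comp_apply)

lemma nonneg: "0 \<le> x \<Longrightarrow> 0 \<le> P x"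
  using strictly_positive linear_0[OF linear] unfolding strictly_positive_def
  by (cases "x = 0") (auto simp: order.order_iff_strict)

lemma fixed_point_if_le:
  assumes "x \<le> P x"
  shows "P x = x"
proof (rule ccontr)
  assume "P x \<noteq> x"
  with assms have "0 < P (P x - x)"
    using strictly_positive by (simp add: strictly_positive_def)
  then show False
    by (simp add: linear_diff[OF linear])
qed

lemma fixed_point_pprt:
  assumes "P x = x"
  shows "P (vector_lattice.pprt x) = vector_lattice.pprt x"
proof (rule fixed_point_if_le)
  have "x \<le> P (vector_lattice.pprt x)"
    using positive_linear_mono[OF linear nonneg, of x "vector_lattice.pprt x"] assms
    by (simp add: vector_lattice.pprt_def)
  then show "vector_lattice.pprt x \<le> P (vector_lattice.pprt x)"
    using nonneg[of "vector_lattice.pprt x"] by (simp add: vector_lattice.pprt_def)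
qed

lemma continuous_on_comp_labs: "continuous_on UNIV (\<lambda>x. P (labs x))"
proof -
  obtain B where B: "B-lipschitz_on UNIV P"
    using bounded_linear.lipschitz_boundE[OF bounded_linear_if_positive[OF banach_lattice linear nonneg]] .
  have "(B * 1)-lipschitz_on UNIV (\<lambda>x. P (labs x))"
    by (rule lipschitz_on_compose2[OF lipschitz_on_labs[OF banach_lattice] lipschitz_on_subset[OF B subset_UNIV]])
  then show ?thesis
    by (rule lipschitz_on_continuous_on)
qed

end

locale irreducible_strictly_positive_projection = strictly_positive_projection +
  assumes irreducible: "\<And>J. lattice_ideal J \<Longrightarrow> closed J \<Longrightarrow> P ` J \<subseteq> J \<Longrightarrow> J = {0} \<or> J = UNIV"
begin

lemma fixed_points_not_disjoint:
  assumes y: "P y = y" "0 < y" and z: "P z = z" "0 < z"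
  shows "inf y z \<noteq> 0"
proof
  assume disjoint: "inf y z = 0"
  define J where "J = {x. P (labs x) \<in> disjoint_complement z}"
  have "lattice_ideal J"
    unfolding J_def
    by (rule lattice_ideal_vimage_positive[OF lattice_ideal_disjoint_complement linear nonneg])
  moreover have "closed J"
    unfolding J_def
    using closed_vimage[OF closed_disjoint_complement[OF banach_lattice] continuous_on_comp_labs]
    by (simp add: vimage_def)
  moreover have "P ` J \<subseteq> J"
  proof
    fix v
    assume "v \<in> P ` J"
    then obtain x where x: "x \<in> J" "v = P x"
      by blast
    have "P (labs (P x)) \<le> P (labs x)"
      using positive_linear_mono[OF linear nonneg labs_positive_linear_le[OF linear nonneg]]
      by simp
    then show "v \<in> J"
      using x lattice_ideal_nonneg_le[OF lattice_ideal_disjoint_complement _ nonneg[OF vector_lattice.abs_ge_zero]]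
      by (simp add: J_def)
  qed
  moreover have "y \<in> J" "z \<notin> J"
    using y z disjoint by (simp_all add: J_def disjoint_complement_def vector_lattice.abs_of_nonneg)
  ultimately show False
    using irreducible y(2) by blast
qed

lemma fixed_point_comparable:
  assumes "P x = x"
  shows "x \<le> 0 \<or> 0 \<le> x"
proof (rule ccontr)
  assume "\<not> (x \<le> 0 \<or> 0 \<le> x)"
  then have "vector_lattice.pprt x \<noteq> 0" "vector_lattice.pprt (- x) \<noteq> 0"
    by (metis vector_lattice.le_zero_iff_zero_pprt neg_le_0_iff_le)+
  then have "0 < vector_lattice.pprt x" "0 < vector_lattice.pprt (- x)"
    by (simp_all add: order_le_neq_trans)
  moreover have "P (- x) = - x"
    using assms by (simp add: linear_neg[OF linear])
  ultimately show False
    using fixed_points_not_disjoint fixed_point_pprt assms inf_pprt_pprt_uminus by metis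
qed

lemma range_eq_span:
  assumes "0 < y" "P y = y"
  shows "range P = span {y}"
proof
  show "range P \<subseteq> span {y}"
  proof
    fix v
    assume "v \<in> range P"
    then have "P (v - t *\<^sub>R y) = v - t *\<^sub>R y" for t
      using assms by (auto simp: linear_diff[OF linear] linear_scale[OF linear])
    then show "v \<in> span {y}"
      by (intro in_span_if_comparable_along_line[OF banach_lattice \<open>0 < y\<close>] fixed_point_comparable)
  qed
  show "span {y} \<subseteq> range P"
  proof
    fix v
    assume "v \<in> span {y}"
    then obtain k where "v = k *\<^sub>R y"
      by (auto simp: span_singleton)
    then have "v = P v"
      using assms by (simp add: linear_scale[OF linear])
    then show "v \<in> range P"
      by (rule range_eqI)
  qed
qed

end

theorem lemma2p4:
  fixes P :: "'a::{banach, ordered_real_vector, lattice} \<Rightarrow> 'a"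
  assumes "banach_lattice_norm TYPE('a)"
    and "\<exists>x::'a. x \<noteq> 0"
    and "projection P"
    and "strictly_positive P"
    and "\<And>J. lattice_ideal J \<Longrightarrow> closed J \<Longrightarrow> P ` J \<subseteq> J \<Longrightarrow> J = {0} \<or> J = UNIV"
  shows "dim (range P) = 1"
proof -
  interpret irreducible_strictly_positive_projection P
    using assms(1,3,4,5) by unfold_locales
  obtain x :: 'a where "x \<noteq> 0"
    using assms(2) by blast
  then have "0 < labs x"
    by (simp add: order_le_neq_trans)
  then have "0 < P (labs x)"
    using assms(4) by (simp add: strictly_positive_def)
  moreover have "P (P (labs x)) = P (labs x)"
    by simp
  ultimately have "range P = span {P (labs x)}"
    by (rule range_eq_span)
  moreover have "independent {P (labs x)}"
    using \<open>0 < P (labs x)\<close> by (intro independent_insertI independent_empty) auto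
  ultimately show ?thesis
    by (simp add: dim_eq_card_independent)
qed

end
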